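(* Let $A$ be a $\lambda$-term and $v,v'$ variables. If $v'\notin FV(vA)$ and $v,v'\notin BV(A)$, then $A\{v:=v'\}\{v':=v\}=_{\mathcal M}A$. Consequently $\to_{\alpha'}$ and $\twoheadrightarrow_{\alpha'}$ are symmetric relations, and $\twoheadrightarrow_{\alpha'}$ is the same relation as $=_{\alpha'}$ on $\lambda$-terms.
   Context: $\lambda$-terms over an infinite variable set $\mathcal V$: $\mathcal M ::= \mathcal V \mid (\lambda\mathcal V.\mathcal M)\mid(\mathcal M\mathcal M)$; $=_{\mathcal M}$ is syntactic identity. $FV(C)$ is the set of variables with a free occurrence in $C$ (occurrences inside the body of $\lambda v.\cdot$ or as the $v$ of $\lambda v$ are bound); $BV(C)$ is the set of $v$ such that $\lambda v$ occurs in $C$; $FV(vA)=\{v\}\cup FV(A)$. Grafting $A\{v:=B\}$: $v\{v:=B\}=B$; $v'\{v:=B\}=v'$ if $v'\neq v$; $(AC)\{v:=B\}=A\{v:=B\}C\{v:=B\}$; $(\lambda v.A)\{v:=B\}=\lambda v.A$; $(\lambda v'.A)\{v:=B\}=\lambda v'.A\{v:=B\}$ if $v\neq v'$. $\to_{\alpha'}$ is the compatible closure (closure under $A\mapsto AC$, $A\mapsto CA$, $A\mapsto\lambda u.A$) of the rule $\lambda v.A\to_{\alpha'}\lambda v'.A\{v:=v'\}$ whenever $v'\notin FV(vA)$ and $v,v'\notin BV(A)$. $\twoheadrightarrow_{\alpha'}$ is its reflexive transitive closure and $=_{\alpha'}$ its equivalence closure. *)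

theory Defs
  imports Main
begin

datatype 'v lterm = Var 'v | Lam 'v "'v lterm" | App "'v lterm" "'v lterm"

fun FV :: "'v lterm \<Rightarrow> 'v set" where
  "FV (Var x) = {x}"
| "FV (Lam x A) = FV A - {x}"
| "FV (App A B) = FV A \<union> FV B"

fun BV :: "'v lterm \<Rightarrow> 'v set" where
  "BV (Var x) = {}"
| "BV (Lam x A) = insert x (BV A)"
| "BV (App A B) = BV A \<union> BV B"

fun graft :: "'v lterm \<Rightarrow> 'v \<Rightarrow> 'v lterm \<Rightarrow> 'v lterm" where
  "graft (Var x) v B = (if x = v then B else Var x)"
| "graft (App A C) v B = App (graft A v B) (graft C v B)"
| "graft (Lam x A) v B = (if x = v then Lam x A else Lam x (graft A v B))"

text \<open>One-step alpha' relation: compatible closure of the renaming rule.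
  FV(vA) = {v} \<union> FV A.\<close>
inductive alpha1 :: "'v lterm \<Rightarrow> 'v lterm \<Rightarrow> bool" where
  rename: "v' \<notin> insert v (FV A) \<Longrightarrow> v \<notin> BV A \<Longrightarrow> v' \<notin> BV A
           \<Longrightarrow> alpha1 (Lam v A) (Lam v' (graft A v (Var v')))"
| appL: "alpha1 A A' \<Longrightarrow> alpha1 (App A C) (App A' C)"
| appR: "alpha1 A A' \<Longrightarrow> alpha1 (App C A) (App C A')"
| lam: "alpha1 A A' \<Longrightarrow> alpha1 (Lam u A) (Lam u A')"

abbreviation alpha_star :: "'v lterm \<Rightarrow> 'v lterm \<Rightarrow> bool" where
  "alpha_star \<equiv> alpha1\<^sup>*\<^sup>*"

abbreviation alpha_eq :: "'v lterm \<Rightarrow> 'v lterm \<Rightarrow> bool" where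
  "alpha_eq \<equiv> equivclp alpha1"

end

theory Submission
  imports Defs
begin

text \<open>If v' occurs nowhere in A, then in A{v:=v'} the variable v' marks exactly the free
  occurrences of v, so grafting v back for v' restores A. Hence every renaming step
  \<open>\<lambda>v. A \<rightarrow> \<lambda>v'. A{v:=v'}\<close> is undone by the renaming step back from v' to v, so the
  one-step relation is symmetric and its reflexive transitive closure is already an equivalence.\<close>

lemma graft_fresh: "v \<notin> FV A \<Longrightarrow> graft A v B = A"
  by (induction A) auto

lemma BV_graft_Var [simp]: "BV (graft A v (Var w)) = BV A"
  by (induction A) auto

lemma notin_FV_graft: "v \<notin> FV B \<Longrightarrow> v \<notin> FV (graft A v B)"
  by (induction A) auto

lemma graft_Var_graft_Var_inverse:
  "v' \<notin> FV A \<Longrightarrow> v' \<notin> BV A \<Longrightarrow> graft (graft A v (Var v')) v' (Var v) = A"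
  by (induction A) (auto simp: graft_fresh)

lemma alpha1_sym: "alpha1 A B \<Longrightarrow> alpha1 B A"
proof (induction rule: alpha1.induct)
  case (rename v' v A)
  have "alpha1 (Lam v' (graft A v (Var v'))) (Lam v (graft (graft A v (Var v')) v' (Var v)))"
    using rename by (intro alpha1.rename) (auto simp: notin_FV_graft)
  then show ?case
    using rename by (simp add: graft_Var_graft_Var_inverse)
qed (auto intro: alpha1.intros)

lemma symp_alpha1: "symp alpha1"
  by (rule sympI) (rule alpha1_sym)

lemma alpha_star_eq_alpha_eq: "alpha_star = alpha_eq"
  by (simp add: equivclp_def symp_symclp_eq[OF symp_alpha1])

theorem lemma4p4:
  assumes "infinite (UNIV :: 'v set)"
  shows "(\<forall>(A :: 'v lterm) v v'. v' \<notin> insert v (FV A) \<and> v \<notin> BV A \<and> v' \<notin> BV A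
            \<longrightarrow> graft (graft A v (Var v')) v' (Var v) = A)
       \<and> symp (alpha1 :: 'v lterm \<Rightarrow> 'v lterm \<Rightarrow> bool)
       \<and> symp (alpha_star :: 'v lterm \<Rightarrow> 'v lterm \<Rightarrow> bool)
       \<and> (alpha_star :: 'v lterm \<Rightarrow> 'v lterm \<Rightarrow> bool) = alpha_eq"
  by (simp add: graft_Var_graft_Var_inverse symp_alpha1 symp_rtranclp alpha_star_eq_alpha_eq)

end
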